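(* Let $m,n,p \in \mathbb{N}$. The symmetric Kronecker product $\underline{\otimes}$ (defined in the context) on rectangular matrices has the following properties. (a) (Symmetry) $A \,\underline{\otimes}\, B = B \,\underline{\otimes}\, A$ for all $A,B\in\mathbb{R}^{m\times n}$. (b) (Mixed vector product) $(A\,\underline{\otimes}\, B)\operatorname{svec}(\pi(C)) = \operatorname{svec}(\pi(B\,\pi(C)\,A^T))$ for all $A,B\in\mathbb{R}^{m\times n}$, $C\in\mathbb{R}^{n\times n}$. (c) (Transpose) $(A\,\underline{\otimes}\, B)^T = A^T\,\underline{\otimes}\, B^T$ for all $A,B\in\mathbb{R}^{m\times n}$. (d) (Mixed products) For $A,B\in\mathbb{R}^{m\times n}$ and $C,D\in\mathbb{R}^{n\times p}$: $(A\,\underline{\otimes}\, B)(C\,\underline{\otimes}\, D) = \tfrac12\left(AC\,\underline{\otimes}\, BD + AD\,\underline{\otimes}\, BC\right)$; in particular $(A\,\underline{\otimes}\, B)(C\,\underline{\otimes}\, C) = AC\,\underline{\otimes}\, BC$. Also, for $A,B\in\mathbb{R}^{m\times n}$ and $C\in\mathbb{R}^{p\times m}$: $(C\,\underline{\otimes}\, C)(A\,\underline{\otimes}\, B) = CA\,\underline{\otimes}\, CB$. (e) (Shared eigenvectors) Let $A,B\in\mathbb{R}^{n\times n}$ and let $x,y\in\mathbb{C}^n$ be nonzero with $Ax=\lambda_1x$, $Bx=\mu_1x$, $Ay=\lambda_2y$, $By=\mu_2y$. Then $x\,\underline{\otimes}\, y$ is an eigenvector of $A\,\underline{\otimes}\,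 B$ with eigenvalue $\tfrac12(\lambda_1\mu_2+\lambda_2\mu_1)$. (f) (Zero) For $A,B\in\mathbb{R}^{m\times n}$, $A\,\underline{\otimes}\, B = 0$ if and only if $A=0$ or $B=0$.
   Context: For $k \in \mathbb{N}$ let $\underline{k} = k(k+1)/2$, $\mathbb{S}^k$ the real symmetric $k\times k$ matrices, $\langle A,B\rangle_F=\operatorname{tr}(A^TB)$, $\operatorname{vec}$ column-stacking vectorization, $\otimes$ the standard Kronecker product, $e_1,\dots,e_k$ the standard basis of $\mathbb{R}^k$. Enumerate the pairs $(r,c)$, $1\le r\le c\le k$, in the order $(1,1),(1,2),\dots,(1,k),(2,2),\dots,(2,k),\dots,(k,k)$ as $(r(\ell),c(\ell))$, $\ell=1,\dots,\underline{k}$, and set $E_\ell = e_{r(\ell)}e_{r(\ell)}^T$ if $r(\ell)=c(\ell)$, $E_\ell=\frac{\sqrt2}{2}(e_{r(\ell)}e_{c(\ell)}^T+e_{c(\ell)}e_{r(\ell)}^T)$ if $r(\ell)<c(\ell)$. Let $W_k\in\mathbb{R}^{\underline{k}\times k^2}$ have $\ell$-th row $\operatorname{vec}(E_\ell)^T$. For $A,B\in\mathbb{R}^{m\times n}$ (or $\mathbb{C}^{m\times n}$, same formula) the symmetric Kronecker product is $A\,\underline{\otimes}\, B = W_m(A\otimes B)W_n^T\in\mathbb{R}^{\underline{m}\times\underline{n}}$; for column vectors $x,y\in\mathbb{C}^n$ this gives $x\,\underline{\otimes}\, y = W_n(x\otimes y)\in\mathbb{C}^{\underline{n}}$ (as $W_1=1$).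 $\operatorname{svec}:\mathbb{S}^n\to\mathbb{R}^{\underline n}$, $\operatorname{svec}(P) = W_n\operatorname{vec}(P) = (\langle P,E_1\rangle_F,\dots,\langle P,E_{\underline n}\rangle_F)^T$, and $\pi(A) = (A+A^T)/2$ for square $A$. *)

theory Defs
  imports Complex_Main "Jordan_Normal_Form.Char_Poly"
begin

text \<open>Indices are 0-based throughout (the paper uses 1-based indices).\<close>

definition tri :: "nat \<Rightarrow> nat" where
  "tri k = k * (k + 1) div 2"

definition sym_pairs :: "nat \<Rightarrow> (nat \<times> nat) list" where
  "sym_pairs k = concat (map (\<lambda>r. map (\<lambda>c. (r, c)) [r..<k]) [0..<k])"

definition mvec :: "'a mat \<Rightarrow> 'a vec" where
  "mvec M = vec (dim_row M * dim_col M) (\<lambda>i. M $$ (i mod dim_row M, i div dim_row M))"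

definition symE :: "nat \<Rightarrow> nat \<Rightarrow> 'a :: real_field mat" where
  "symE k l = (let (r, c) = sym_pairs k ! l in
     mat k k (\<lambda>(i, j).
       if r = c then (if i = r \<and> j = r then 1 else 0)
       else (if (i = r \<and> j = c) \<or> (i = c \<and> j = r) then of_real (sqrt 2 / 2) else 0)))"

definition Wmat :: "nat \<Rightarrow> 'a :: real_field mat" where
  "Wmat k = mat (tri k) (k * k) (\<lambda>(l, j). mvec (symE k l :: 'a mat) $ j)"

definition kron :: "'a :: times mat \<Rightarrow> 'a mat \<Rightarrow> 'a mat" where
  "kron A B = mat (dim_row A * dim_row B) (dim_col A * dim_col B)
     (\<lambda>(i, j). A $$ (i div dim_row B, j div dim_col B) * B $$ (i mod dim_row B, j mod dim_col B))"

definition kron_vec :: "'a :: times vec \<Rightarrow> 'a vec \<Rightarrow> 'a vec" where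
  "kron_vec x y = vec (dim_vec x * dim_vec y) (\<lambda>i. x $ (i div dim_vec y) * y $ (i mod dim_vec y))"

definition symkron :: "'a :: real_field mat \<Rightarrow> 'a mat \<Rightarrow> 'a mat" where
  "symkron A B = Wmat (dim_row A) * kron A B * transpose_mat (Wmat (dim_col A))"

text \<open>Symmetric Kronecker product of column vectors x, y of length n: W_n (x \<otimes> y)
  (this equals the matrix definition applied to n x 1 matrices since W_1 = 1).\<close>
definition symkron_vec :: "'a :: real_field vec \<Rightarrow> 'a vec \<Rightarrow> 'a vec" where
  "symkron_vec x y = Wmat (dim_vec x) *\<^sub>v kron_vec x y"

definition svec :: "'a :: real_field mat \<Rightarrow> 'a vec" where
  "svec P = Wmat (dim_row P) *\<^sub>v mvec P"

definition symp :: "real mat \<Rightarrow> real mat" where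
  "symp A = (1/2) \<cdot>\<^sub>m (A + transpose_mat A)"

end

theory Submission
  imports Defs
begin

(* For a symmetric n x n matrix S the vector W_n^T svec S is vec S, so the Kronecker identity
   vec (B S A^T) = (A \<otimes> B) vec S shows that symkron A B acts on svec-coordinates as the
   congruence S \<mapsto> B S A^T; since svec X only depends on X + X^T, a general X acts through
   its symmetric part. Every vector is svec of a symmetric matrix, so matrix identities can be
   tested on the vectors svec S, which turns symmetry, the mixed products and the eigenvector
   property into identities between congruences. The transpose rule comes from the one for the
   ordinary Kronecker product. If symkron A B = 0, testing with e_j e_k^T + e_k e_j^T gives
   relations between the columns of A and B that force A = 0 or B = 0. *)

lemma less_mult_imp_mod_div_less:
  fixes u a b :: nat
  assumes "u < a * b"
  shows "u mod a < a" and "u div a < b"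
proof -
  from assms have "a > 0" by (cases a) auto
  then show "u mod a < a" by simp
  from assms show "u div a < b" by (simp add: less_mult_imp_div_less mult.commute)
qed

lemma sum_lessThan_mult_mod_div:
  fixes a b :: nat
  shows "(\<Sum>u<a * b. f (u mod a) (u div a)) = (\<Sum>i<a. \<Sum>j<b. f i j)"
proof (cases "a = 0")
  case False
  have "(\<Sum>u<b * a. f (u mod a) (u div a)) = (\<Sum>j<b. \<Sum>u\<in>{j * a..<j * a + a}. f (u mod a) (u div a))"
    by (rule sum.nat_group[symmetric])
  also have "\<dots> = (\<Sum>j<b. \<Sum>i<a. f i j)"
  proof (rule sum.cong[OF refl])
    fix j
    have "(\<Sum>u\<in>{j * a..<j * a + a}. f (u mod a) (u div a))
        = (\<Sum>i\<in>{0..<a}. f ((i + j * a) mod a) ((i + j * a) div a))"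
      using sum.shift_bounds_nat_ivl[of "\<lambda>u. f (u mod a) (u div a)" 0 "j * a" a]
      by (simp add: add.commute)
    also have "\<dots> = (\<Sum>i<a. f i j)"
      using False by (intro sum.cong) auto
    finally show "(\<Sum>u\<in>{j * a..<j * a + a}. f (u mod a) (u div a)) = (\<Sum>i<a. f i j)" .
  qed
  finally show ?thesis
    by (simp add: sum.swap[of _ "{..<b}"] mult.commute)
qed simp

lemma symmetrized_product_eq_zero:
  fixes u w :: "nat \<Rightarrow> 'a::field_char_0"
  assumes "\<And>i j. i < n \<Longrightarrow> j < n \<Longrightarrow> u i * w j + u j * w i = 0"
  shows "(\<forall>i<n. u i = 0) \<or> (\<forall>i<n. w i = 0)"
proof (rule ccontr)
  assume "\<not> ?thesis"
  then obtain a b where a: "a < n" "u a \<noteq> 0" and b: "b < n" "w b \<noteq> 0"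
    by auto
  from assms[OF a(1) a(1)] a(2) have "w a = 0"
    by simp
  with assms[OF a(1) b(1)] have "u a * w b = 0"
    by simp
  with a b show False
    by simp
qed

lemma nonzero_mat_index:
  assumes "A \<in> carrier_mat m n" and "A \<noteq> 0\<^sub>m m n"
  shows "\<exists>i<m. \<exists>j<n. A $$ (i, j) \<noteq> 0"
proof (rule ccontr)
  assume "\<not> ?thesis"
  then have "A = 0\<^sub>m m n"
    using assms(1) by (intro eq_matI) auto
  with assms(2) show False ..
qed

lemma eq_mat_by_mult_vecI:
  fixes M N :: "'a::comm_ring_1 mat"
  assumes M: "M \<in> carrier_mat nr nc" and N: "N \<in> carrier_mat nr nc"
    and eq: "\<And>v. v \<in> carrier_vec nc \<Longrightarrow> M *\<^sub>v v = N *\<^sub>v v"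
  shows "M = N"
proof (rule eq_matI)
  fix i j
  assume i: "i < dim_row N" and j: "j < dim_col N"
  have "M $$ (i, j) = (M *\<^sub>v unit_vec nc j) $ i"
    using M N i j by simp
  also have "\<dots> = (N *\<^sub>v unit_vec nc j) $ i"
    by (simp add: eq)
  also have "\<dots> = N $$ (i, j)"
    using N i j by simp
  finally show "M $$ (i, j) = N $$ (i, j)" .
qed (use M N in auto)

lemma smult_mat_mult_vec:
  "M \<in> carrier_mat nr nc \<Longrightarrow> v \<in> carrier_vec nc \<Longrightarrow> (a \<cdot>\<^sub>m M) *\<^sub>v v = a \<cdot>\<^sub>v (M *\<^sub>v v)"
  by (rule eq_vecI) (auto simp: scalar_prod_def sum_distrib_left mult.assoc)

lemma half_smult_double: "(1/2) \<cdot>\<^sub>m (X + X) = (X :: 'a::field_char_0 mat)"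
  by (rule eq_matI) auto

lemma transpose_mult_mult_transpose:
  fixes B S A :: "'a::comm_ring_1 mat"
  assumes "B \<in> carrier_mat m n" and "S \<in> carrier_mat n n'" and "A \<in> carrier_mat m' n'"
  shows "transpose_mat (B * S * transpose_mat A) = A * transpose_mat S * transpose_mat B"
proof -
  have BS: "B * S \<in> carrier_mat m n'"
    using assms by simp
  have "transpose_mat (B * S * transpose_mat A) = transpose_mat (transpose_mat A) * transpose_mat (B * S)"
    by (rule transpose_mult[OF BS]) (use assms(3) in simp)
  also have "\<dots> = A * (transpose_mat S * transpose_mat B)"
    using transpose_mult[OF assms(1,2)] by simp
  also have "\<dots> = A * transpose_mat S * transpose_mat B"
    using assms by simp
  finally show ?thesis .
qed

lemma mult_mult_transpose_comp:
  fixes A B C D S :: "'a::comm_ring_1 mat"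
  assumes B: "B \<in> carrier_mat m n" and D: "D \<in> carrier_mat n p" and S: "S \<in> carrier_mat p p'"
    and C: "C \<in> carrier_mat n' p'" and A: "A \<in> carrier_mat m' n'"
  shows "B * (D * S * transpose_mat C) * transpose_mat A = (B * D) * S * transpose_mat (A * C)"
proof -
  have At: "transpose_mat A \<in> carrier_mat n' m'" and Ct: "transpose_mat C \<in> carrier_mat p' n'"
    using A C by auto
  have DS: "D * S \<in> carrier_mat n p'"
    using D S by simp
  have "B * (D * S * transpose_mat C) * transpose_mat A = B * (D * S * transpose_mat C * transpose_mat A)"
    using B DS Ct At by (intro assoc_mult_mat) auto
  also have "D * S * transpose_mat C * transpose_mat A = D * S * (transpose_mat C * transpose_mat A)"
    using DS Ct At by (rule assoc_mult_mat)
  also have "transpose_mat C * transpose_mat A = transpose_mat (A * C)"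
    using A C by (rule transpose_mult[symmetric])
  also have "B * (D * S * transpose_mat (A * C)) = B * (D * S) * transpose_mat (A * C)"
    using B DS A C by (intro assoc_mult_mat[symmetric]) auto
  also have "B * (D * S) = B * D * S"
    using B D S by (rule assoc_mult_mat[symmetric])
  finally show ?thesis .
qed

lemma transpose_sym_part:
  fixes X :: "'a::field mat"
  assumes "X \<in> carrier_mat k k"
  shows "transpose_mat ((1/2) \<cdot>\<^sub>m (X + transpose_mat X)) = (1/2) \<cdot>\<^sub>m (X + transpose_mat X)"
proof (rule eq_matI)
  fix i j
  assume "i < dim_row ((1/2) \<cdot>\<^sub>m (X + transpose_mat X))"
    and "j < dim_col ((1/2) \<cdot>\<^sub>m (X + transpose_mat X))"
  then show "transpose_mat ((1/2) \<cdot>\<^sub>m (X + transpose_mat X)) $$ (i, j)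
      = ((1/2) \<cdot>\<^sub>m (X + transpose_mat X)) $$ (i, j)"
    using assms by (simp add: ac_simps)
qed (use assms in simp_all)

definition outer_prod :: "'a::times vec \<Rightarrow> 'a vec \<Rightarrow> 'a mat" where
  "outer_prod u w = mat (dim_vec u) (dim_vec w) (\<lambda>(i, j). u $ i * w $ j)"

lemma outer_prod_carrier: "u \<in> carrier_vec n \<Longrightarrow> w \<in> carrier_vec k \<Longrightarrow> outer_prod u w \<in> carrier_mat n k"
  by (simp add: outer_prod_def)

lemma transpose_outer_prod: "transpose_mat (outer_prod u w) = outer_prod w (u :: 'a::comm_ring_1 vec)"
  by (rule eq_matI) (auto simp: outer_prod_def)

lemma outer_prod_smult: "outer_prod (a \<cdot>\<^sub>v u) (b \<cdot>\<^sub>v w) = (a * b) \<cdot>\<^sub>m outer_prod u (w :: 'a::comm_ring_1 vec)"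
  by (rule eq_matI) (auto simp: outer_prod_def)

lemma mult_outer_prod_mult_transpose:
  fixes A B :: "'a::comm_ring_1 mat"
  assumes B: "B \<in> carrier_mat m n" and A: "A \<in> carrier_mat m' n"
    and u: "u \<in> carrier_vec n" and w: "w \<in> carrier_vec n"
  shows "B * outer_prod u w * transpose_mat A = outer_prod (B *\<^sub>v u) (A *\<^sub>v w)"
proof (rule eq_matI)
  fix i j
  assume "i < dim_row (outer_prod (B *\<^sub>v u) (A *\<^sub>v w))" and "j < dim_col (outer_prod (B *\<^sub>v u) (A *\<^sub>v w))"
  then have i: "i < m" and j: "j < m'"
    using A B by (auto simp: outer_prod_def)
  have "(B * outer_prod u w * transpose_mat A) $$ (i, j)
      = (\<Sum>k<n. (\<Sum>t<n. B $$ (i, t) * (u $ t * w $ k)) * A $$ (j, k))"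
    using A B u w i j
    by (simp add: scalar_prod_def atLeast0LessThan outer_prod_def del: assoc_mult_mat)
  also have "\<dots> = (\<Sum>t<n. B $$ (i, t) * u $ t) * (\<Sum>k<n. A $$ (j, k) * w $ k)"
    by (simp add: sum_product sum_distrib_left sum_distrib_right mult_ac)
  also have "\<dots> = outer_prod (B *\<^sub>v u) (A *\<^sub>v w) $$ (i, j)"
    using A B u w i j by (simp add: outer_prod_def scalar_prod_def atLeast0LessThan)
  finally show "(B * outer_prod u w * transpose_mat A) $$ (i, j) = outer_prod (B *\<^sub>v u) (A *\<^sub>v w) $$ (i, j)" .
qed (use A B u w in \<open>simp_all add: outer_prod_def\<close>)

section \<open>The enumeration of index pairs\<close>

lemma set_sym_pairs: "set (sym_pairs k) = {(r, c). r \<le> c \<and> c < k}"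
  unfolding sym_pairs_def by (force simp: image_iff)

lemma distinct_sym_pairs: "distinct (sym_pairs k)"
  unfolding sym_pairs_def
proof (rule distinct_concat)
  have "inj_on (\<lambda>r. map (Pair r) [r..<k]) {0..<k}"
    by (rule inj_onI) (auto simp: upt_conv_Cons)
  then show "distinct (map (\<lambda>r. map (Pair r) [r..<k]) [0..<k])"
    by (simp add: distinct_map)
qed (auto simp: distinct_map inj_on_def)

lemma sum_lessThan_diff_eq_tri: "(\<Sum>r<k. k - r) = tri k"
proof (induction k)
  case (Suc k)
  have "(\<Sum>r<k. Suc k - r) = (\<Sum>r<k. Suc (k - r))"
    by (rule sum.cong) auto
  then have "(\<Sum>r<Suc k. Suc k - r) = (\<Sum>r<k. k - r) + Suc k"
    by (simp add: sum_Suc)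
  with Suc show ?case
    by (simp add: tri_def)
qed (simp add: tri_def)

lemma length_sym_pairs: "length (sym_pairs k) = tri k"
  by (simp add: sym_pairs_def length_concat sum_list_distinct_conv_sum_set
      o_def atLeast0LessThan sum_lessThan_diff_eq_tri)

lemma sym_pairs_nth:
  assumes "l < tri k" and "sym_pairs k ! l = (r, c)"
  shows "r \<le> c" and "c < k"
  using assms nth_mem[of l "sym_pairs k"] by (auto simp: set_sym_pairs length_sym_pairs)

lemma sym_pairs_nth_inj:
  "l < tri k \<Longrightarrow> l' < tri k \<Longrightarrow> sym_pairs k ! l = sym_pairs k ! l' \<Longrightarrow> l = l'"
  using nth_eq_iff_index_eq[OF distinct_sym_pairs] by (simp add: length_sym_pairs)

lemma obtain_sym_pairs_index:
  assumes "i < k" and "j < k"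
  obtains l where "l < tri k" and "sym_pairs k ! l = (min i j, max i j)"
proof -
  have "(min i j, max i j) \<in> set (sym_pairs k)"
    using assms by (simp add: set_sym_pairs)
  then show ?thesis
    using that by (auto simp: in_set_conv_nth length_sym_pairs)
qed

section \<open>The basis matrices, svec and smat\<close>

definition sym_unit :: "nat \<Rightarrow> nat \<Rightarrow> nat \<Rightarrow> 'a::comm_ring_1 mat" where
  "sym_unit k r c = mat k k (\<lambda>(i, j).
     (if (i, j) = (r, c) then 1 else 0) + (if (i, j) = (c, r) then 1 else 0))"

(* sym_unit k r r has the entry 2 at (r, r), hence the weight 1/2 on the diagonal. *)
definition sym_weight :: "nat \<Rightarrow> nat \<Rightarrow> 'a::real_field" where
  "sym_weight r c = (if r = c then 1/2 else of_real (sqrt 2 / 2))"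

lemma sym_weight_sq: "sym_weight r c ^ 2 = (if r = c then 1/4 else (1/2 :: 'a::real_field))"
proof -
  have "(of_real (sqrt 2 / 2) :: 'a) ^ 2 = of_real ((sqrt 2 / 2) ^ 2)"
    by (rule of_real_power[symmetric])
  also have "(sqrt 2 / 2) ^ 2 = (1/2 :: real)"
    by (simp add: power_divide)
  finally show ?thesis
    by (simp add: sym_weight_def power2_eq_square)
qed

lemma sym_weight_nonzero: "sym_weight r c \<noteq> (0 :: 'a::real_field)"
  by (simp add: sym_weight_def)

lemma symE_eq_smult_sym_unit:
  "sym_pairs k ! l = (r, c) \<Longrightarrow> symE k l = sym_weight r c \<cdot>\<^sub>m sym_unit k r c"
  by (rule eq_matI) (auto simp: symE_def sym_weight_def sym_unit_def)

lemma sym_unit_dims [simp]: "dim_row (sym_unit k r c) = k" "dim_col (sym_unit k r c) = k"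
  by (simp_all add: sym_unit_def)

lemma sym_unit_carrier: "sym_unit k r c \<in> carrier_mat k k"
  by (rule carrier_matI) simp_all

lemma sym_unit_index:
  "i < k \<Longrightarrow> j < k \<Longrightarrow> sym_unit k r c $$ (i, j) =
    (if (i, j) = (r, c) then 1 else 0) + (if (i, j) = (c, r) then 1 else 0)"
  by (simp add: sym_unit_def)

lemma transpose_sym_unit: "transpose_mat (sym_unit k r c) = sym_unit k r c"
proof (rule eq_matI)
  fix i j
  assume "i < dim_row (sym_unit k r c)" and "j < dim_col (sym_unit k r c)"
  then show "transpose_mat (sym_unit k r c) $$ (i, j) = sym_unit k r c $$ (i, j)"
    by (simp add: sym_unit_index add.commute conj_commute)
qed simp_all

lemma sym_unit_index_min_max:
  assumes "r \<le> c" and "i < k" and "j < k"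
  shows "sym_unit k r c $$ (i, j) =
    (if (r, c) = (min i j, max i j) then (if i = j then 2 else 1) else 0)"
  using assms by (auto simp: sym_unit_def min_def max_def)

lemma frobenius_sym_unit:
  assumes "r < k" and "c < k"
  shows "(\<Sum>i<k. \<Sum>j<k. sym_unit k r c $$ (i, j) * X $$ (i, j)) = X $$ (r, c) + X $$ (c, r)"
proof -
  have "(\<Sum>i<k. \<Sum>j<k. sym_unit k r c $$ (i, j) * X $$ (i, j))
      = (\<Sum>i<k. \<Sum>j<k. (if j = c then if i = r then X $$ (r, c) else 0 else 0)
                        + (if j = r then if i = c then X $$ (c, r) else 0 else 0))"
    by (intro sum.cong refl) (auto simp: sym_unit_def)
  also have "\<dots> = X $$ (r, c) + X $$ (c, r)"
    using assms by (simp add: sum.distrib)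
  finally show ?thesis .
qed

lemma mult_sym_unit_mult_transpose_index:
  fixes A B :: "'a::comm_ring_1 mat"
  assumes B: "B \<in> carrier_mat m n" and A: "A \<in> carrier_mat m' n"
    and jk: "j < n" "k < n" and i: "i < m" "i' < m'"
  shows "(B * sym_unit n j k * transpose_mat A) $$ (i, i')
    = B $$ (i, j) * A $$ (i', k) + B $$ (i, k) * A $$ (i', j)"
proof -
  have row: "(B * sym_unit n j k) $$ (i, s)
      = (if s = k then B $$ (i, j) else 0) + (if s = j then B $$ (i, k) else 0)" if "s < n" for s
  proof -
    have "(B * sym_unit n j k) $$ (i, s) = (\<Sum>t<n. B $$ (i, t) * sym_unit n j k $$ (t, s))"
      using B i(1) that by (simp add: scalar_prod_def atLeast0LessThan)
    also have "\<dots> = (\<Sum>t<n. (if t = j then if s = k then B $$ (i, j) else 0 else 0)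
                           + (if t = k then if s = j then B $$ (i, k) else 0 else 0))"
      using that by (intro sum.cong) (auto simp: sym_unit_def)
    also have "\<dots> = (if s = k then B $$ (i, j) else 0) + (if s = j then B $$ (i, k) else 0)"
      using jk by (simp add: sum.distrib)
    finally show ?thesis .
  qed
  have "(B * sym_unit n j k * transpose_mat A) $$ (i, i')
      = (\<Sum>s<n. (B * sym_unit n j k) $$ (i, s) * A $$ (i', s))"
    using A B i by (simp add: scalar_prod_def atLeast0LessThan del: assoc_mult_mat)
  also have "\<dots> = (\<Sum>s<n. (if s = k then B $$ (i, j) * A $$ (i', k) else 0)
                         + (if s = j then B $$ (i, k) * A $$ (i', j) else 0))"
    by (intro sum.cong) (auto simp: row distrib_right)
  also have "\<dots> = B $$ (i, j) * A $$ (i', k) + B $$ (i, k) * A $$ (i', j)"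
    using jk by (simp add: sum.distrib)
  finally show ?thesis .
qed

lemma mvec_carrier: "X \<in> carrier_mat nr nc \<Longrightarrow> mvec X \<in> carrier_vec (nr * nc)"
  by (simp add: mvec_def)

lemma mvec_add:
  assumes "X \<in> carrier_mat nr nc" and "Y \<in> carrier_mat nr nc"
  shows "mvec (X + Y) = mvec X + mvec Y"
  by (rule eq_vecI) (use assms in \<open>auto simp: mvec_def less_mult_imp_mod_div_less\<close>)

lemma mvec_smult: "mvec (a \<cdot>\<^sub>m X) = a \<cdot>\<^sub>v mvec X"
  by (rule eq_vecI) (auto simp: mvec_def less_mult_imp_mod_div_less)

lemma Wmat_dims [simp]: "dim_row (Wmat k) = tri k" "dim_col (Wmat k) = k * k"
  by (simp_all add: Wmat_def)

lemma Wmat_carrier: "Wmat k \<in> carrier_mat (tri k) (k * k)"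
  by (rule carrier_matI) simp_all

lemma symE_dims [simp]: "dim_row (symE k l) = k" "dim_col (symE k l) = k"
  by (simp_all add: symE_def split: prod.splits)

lemma dim_svec [simp]: "dim_vec (svec X) = tri (dim_row X)"
  by (simp add: svec_def)

lemma svec_carrier: "X \<in> carrier_mat k k \<Longrightarrow> svec X \<in> carrier_vec (tri k)"
  by (rule carrier_vecI) simp

lemma svec_add:
  assumes "X \<in> carrier_mat k k" and "Y \<in> carrier_mat k k"
  shows "svec (X + Y) = svec X + svec Y"
  using assms by (simp add: svec_def mvec_add mvec_carrier mult_add_distrib_mat_vec[OF Wmat_carrier])

lemma svec_smult:
  assumes "X \<in> carrier_mat k k"
  shows "svec (a \<cdot>\<^sub>m X) = a \<cdot>\<^sub>v svec X"
  using assms by (simp add: svec_def mvec_smult mvec_carrier mult_mat_vec[OF Wmat_carrier])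

lemma svec_index:
  assumes X: "X \<in> carrier_mat k k" and l: "l < tri k" and rc: "sym_pairs k ! l = (r, c)"
  shows "svec X $ l = sym_weight r c * (X $$ (r, c) + X $$ (c, r))"
proof -
  have "r < k" and "c < k"
    using sym_pairs_nth[OF l rc] by auto
  have "svec X $ l = (\<Sum>u<k * k. symE k l $$ (u mod k, u div k) * X $$ (u mod k, u div k))"
    using X l by (simp add: svec_def Wmat_def mvec_def scalar_prod_def atLeast0LessThan)
  also have "\<dots> = (\<Sum>i<k. \<Sum>j<k. symE k l $$ (i, j) * X $$ (i, j))"
    by (rule sum_lessThan_mult_mod_div)
  also have "\<dots> = sym_weight r c * (\<Sum>i<k. \<Sum>j<k. sym_unit k r c $$ (i, j) * X $$ (i, j))"
    by (simp add: symE_eq_smult_sym_unit[OF rc] sum_distrib_left mult.assoc)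
  also have "\<dots> = sym_weight r c * (X $$ (r, c) + X $$ (c, r))"
    using \<open>r < k\<close> \<open>c < k\<close> by (simp add: frobenius_sym_unit)
  finally show ?thesis .
qed

lemma svec_eq_iff:
  assumes X: "X \<in> carrier_mat k k" and Y: "Y \<in> carrier_mat k k"
  shows "svec X = svec Y \<longleftrightarrow> X + transpose_mat X = Y + transpose_mat Y"
proof
  assume eq: "svec X = svec Y"
  show "X + transpose_mat X = Y + transpose_mat Y"
  proof (rule eq_matI)
    fix i j
    assume "i < dim_row (Y + transpose_mat Y)" and "j < dim_col (Y + transpose_mat Y)"
    then have ij: "i < k" "j < k"
      using Y by auto
    obtain l where l: "l < tri k" "sym_pairs k ! l = (min i j, max i j)"
      using obtain_sym_pairs_index[OF ij] .
    have "X $$ (min i j, max i j) + X $$ (max i j, min i j)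
        = Y $$ (min i j, max i j) + Y $$ (max i j, min i j)"
      using eq svec_index[OF X l] svec_index[OF Y l] sym_weight_nonzero by auto
    then show "(X + transpose_mat X) $$ (i, j) = (Y + transpose_mat Y) $$ (i, j)"
      using ij X Y by (auto simp: min_def max_def add.commute split: if_splits)
  qed (use X Y in auto)
next
  assume eq: "X + transpose_mat X = Y + transpose_mat Y"
  show "svec X = svec Y"
  proof (rule eq_vecI)
    fix l
    assume "l < dim_vec (svec Y)"
    then have l: "l < tri k"
      using Y by simp
    obtain r c where rc: "sym_pairs k ! l = (r, c)"
      by fastforce
    have "r < k" "c < k"
      using sym_pairs_nth[OF l rc] by auto
    then have "X $$ (r, c) + X $$ (c, r) = Y $$ (r, c) + Y $$ (c, r)"
      using arg_cong[OF eq, of "\<lambda>M. M $$ (r, c)"] X Y by simp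
    then show "svec X $ l = svec Y $ l"
      by (simp add: svec_index[OF X l rc] svec_index[OF Y l rc])
  qed (use X Y svec_carrier in auto)
qed

lemma svec_zero: "svec (0\<^sub>m k k) = (0\<^sub>v (tri k) :: 'a::real_field vec)"
proof (rule eq_vecI)
  fix l
  assume "l < dim_vec (0\<^sub>v (tri k) :: 'a vec)"
  then have l: "l < tri k"
    by simp
  obtain r c where rc: "sym_pairs k ! l = (r, c)"
    by fastforce
  then show "svec (0\<^sub>m k k) $ l = 0\<^sub>v (tri k) $ l"
    using l sym_pairs_nth[OF l rc] by (simp add: svec_index[OF zero_carrier_mat l rc])
qed simp

lemma svec_transpose: "X \<in> carrier_mat k k \<Longrightarrow> svec (transpose_mat X) = svec X"
  by (simp add: svec_eq_iff comm_add_mat[of X k k])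

lemma svec_sym_part:
  assumes "X \<in> carrier_mat k k"
  shows "svec ((1/2) \<cdot>\<^sub>m (X + transpose_mat X)) = svec X"
proof -
  have Xt: "transpose_mat X \<in> carrier_mat k k"
    using assms by simp
  then have "X + transpose_mat X \<in> carrier_mat k k"
    by simp
  then have "svec ((1/2) \<cdot>\<^sub>m (X + transpose_mat X)) = (1/2) \<cdot>\<^sub>v (svec X + svec X)"
    by (simp add: svec_smult svec_add[OF assms Xt] svec_transpose[OF assms])
  also have "\<dots> = svec X"
    by (rule eq_vecI) auto
  finally show ?thesis .
qed

definition smat :: "nat \<Rightarrow> 'a::real_field vec \<Rightarrow> 'a mat" where
  "smat k v = mat k k (\<lambda>(i, j). \<Sum>l<tri k. v $ l * symE k l $$ (i, j))"

lemma smat_dims [simp]: "dim_row (smat k v) = k" "dim_col (smat k v) = k"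
  by (simp_all add: smat_def)

lemma smat_carrier: "smat k v \<in> carrier_mat k k"
  by (rule carrier_matI) simp_all

lemma transpose_Wmat_mult_vec:
  assumes "v \<in> carrier_vec (tri k)"
  shows "transpose_mat (Wmat k) *\<^sub>v v = mvec (smat k v)"
proof (rule eq_vecI)
  fix u
  assume "u < dim_vec (mvec (smat k v))"
  then have u: "u < k * k"
    by (simp add: mvec_def)
  then show "(transpose_mat (Wmat k) *\<^sub>v v) $ u = mvec (smat k v) $ u"
    using assms less_mult_imp_mod_div_less[OF u]
    by (simp add: Wmat_def mvec_def smat_def scalar_prod_def atLeast0LessThan mult.commute)
qed (simp add: mvec_def)

lemma smat_index:
  assumes ij: "i < k" "j < k" and l: "l < tri k" "sym_pairs k ! l = (min i j, max i j)"
  shows "smat k v $$ (i, j) = sym_weight (min i j) (max i j) * (if i = j then 2 else 1) * v $ l"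
proof -
  have "symE k l' $$ (i, j) = 0" if l': "l' < tri k" "l' \<noteq> l" for l'
  proof -
    obtain r c where rc: "sym_pairs k ! l' = (r, c)"
      by fastforce
    have "(r, c) \<noteq> (min i j, max i j)"
      using sym_pairs_nth_inj[OF l'(1) l(1)] l'(2) rc l(2) by auto
    then show ?thesis
      using ij sym_pairs_nth[OF l'(1) rc]
      by (auto simp: symE_eq_smult_sym_unit[OF rc] sym_unit_index_min_max)
  qed
  then have "(\<Sum>l'\<in>{..<tri k} - {l}. v $ l' * symE k l' $$ (i, j)) = 0"
    by (intro sum.neutral) auto
  then have "smat k v $$ (i, j) = v $ l * symE k l $$ (i, j)"
    using ij l by (simp add: smat_def sum.remove[of _ l])
  also have "\<dots> = sym_weight (min i j) (max i j) * (if i = j then 2 else 1) * v $ l"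
    using ij by (simp add: symE_eq_smult_sym_unit[OF l(2)] sym_unit_index_min_max)
  finally show ?thesis .
qed

lemma transpose_smat: "transpose_mat (smat k v) = smat k v"
proof (rule eq_matI)
  fix i j
  assume "i < dim_row (smat k v)" and "j < dim_col (smat k v)"
  then have ij: "i < k" "j < k"
    by auto
  obtain l where l: "l < tri k" "sym_pairs k ! l = (min i j, max i j)"
    using obtain_sym_pairs_index[OF ij] .
  then have l': "sym_pairs k ! l = (min j i, max j i)"
    by (simp add: min.commute max.commute)
  show "transpose_mat (smat k v) $$ (i, j) = smat k v $$ (i, j)"
    using ij smat_index[OF ij l, of v] smat_index[OF ij(2,1) l(1) l', of v]
    by (simp add: min.commute max.commute eq_commute[of i j])
qed auto

lemma svec_smat:
  assumes "v \<in> carrier_vec (tri k)"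
  shows "svec (smat k v) = v"
proof (rule eq_vecI)
  fix l
  assume "l < dim_vec v"
  then have l: "l < tri k"
    using assms by simp
  obtain r c where rc: "sym_pairs k ! l = (r, c)"
    by fastforce
  have rc_le: "r \<le> c" "c < k"
    using sym_pairs_nth[OF l rc] by auto
  let ?a = "sym_weight r c * (if r = c then 2 else 1) * v $ l"
  have "smat k v $$ (r, c) = ?a" and "smat k v $$ (c, r) = ?a"
    using rc_le rc smat_index[of r k c l v] smat_index[of c k r l v] l
    by (auto simp: min_def max_def)
  then have "svec (smat k v) $ l = (sym_weight r c)\<^sup>2 * (2 * (if r = c then 2 else 1)) * v $ l"
    by (simp add: svec_index[OF smat_carrier l rc] power2_eq_square algebra_simps)
  then show "svec (smat k v) $ l = v $ l"
    by (simp add: sym_weight_sq)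
qed (use assms svec_carrier[OF smat_carrier] in auto)

lemma smat_svec:
  assumes S: "S \<in> carrier_mat k k" and sym: "transpose_mat S = S"
  shows "smat k (svec S) = S"
proof (rule eq_matI)
  fix i j
  assume "i < dim_row S" and "j < dim_col S"
  then have ij: "i < k" "j < k"
    using S by auto
  obtain l where l: "l < tri k" "sym_pairs k ! l = (min i j, max i j)"
    using obtain_sym_pairs_index[OF ij] .
  have "S $$ (j, i) = S $$ (i, j)"
    using ij S arg_cong[OF sym, of "\<lambda>M. M $$ (i, j)"] by simp
  then have "S $$ (min i j, max i j) + S $$ (max i j, min i j) = 2 * S $$ (i, j)"
    by (auto simp: min_def max_def)
  then have "smat k (svec S) $$ (i, j)
      = (sym_weight (min i j) (max i j))\<^sup>2 * (2 * (if i = j then 2 else 1)) * S $$ (i, j)"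
    by (simp add: smat_index[OF ij l] svec_index[OF S l] power2_eq_square algebra_simps)
  then show "smat k (svec S) $$ (i, j) = S $$ (i, j)"
    by (simp add: sym_weight_sq min_def max_def)
qed (use S in auto)

lemma eq_mat_by_mult_svecI:
  assumes M: "M \<in> carrier_mat nr (tri n)" and N: "N \<in> carrier_mat nr (tri n)"
    and eq: "\<And>S. S \<in> carrier_mat n n \<Longrightarrow> transpose_mat S = S \<Longrightarrow> M *\<^sub>v svec S = N *\<^sub>v svec S"
  shows "M = N"
proof (rule eq_mat_by_mult_vecI[OF M N])
  fix v :: "'a vec"
  assume "v \<in> carrier_vec (tri n)"
  then show "M *\<^sub>v v = N *\<^sub>v v"
    using eq[OF smat_carrier transpose_smat] svec_smat by metis
qed

section \<open>The symmetric Kronecker product\<close>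

lemma kron_carrier: "kron A B \<in> carrier_mat (dim_row A * dim_row B) (dim_col A * dim_col B)"
  by (simp add: kron_def)

lemma kron_mult_mvec:
  fixes A B X :: "'a::comm_ring_1 mat"
  assumes A: "A \<in> carrier_mat m n" and B: "B \<in> carrier_mat m' n'" and X: "X \<in> carrier_mat n' n"
  shows "kron A B *\<^sub>v mvec X = mvec (B * X * transpose_mat A)"
proof (rule eq_vecI)
  fix u
  assume "u < dim_vec (mvec (B * X * transpose_mat A))"
  then have u: "u < m' * m"
    using A B X by (simp add: mvec_def)
  note u_mod_div = less_mult_imp_mod_div_less[OF u]
  have "(kron A B *\<^sub>v mvec X) $ u
      = (\<Sum>w<n' * n. A $$ (u div m', w div n') * B $$ (u mod m', w mod n') * X $$ (w mod n', w div n'))"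
    using A B X u u_mod_div
    by (simp add: kron_def mvec_def scalar_prod_def atLeast0LessThan less_mult_imp_mod_div_less
        mult.commute[of m m'] mult.commute[of n n'])
  also have "\<dots> = (\<Sum>t<n'. \<Sum>j<n. A $$ (u div m', j) * B $$ (u mod m', t) * X $$ (t, j))"
    by (rule sum_lessThan_mult_mod_div)
  also have "\<dots> = (\<Sum>j<n. (\<Sum>t<n'. B $$ (u mod m', t) * X $$ (t, j)) * A $$ (u div m', j))"
    by (subst sum.swap) (simp add: sum_distrib_left sum_distrib_right mult_ac)
  also have "\<dots> = mvec (B * X * transpose_mat A) $ u"
    using A B X u u_mod_div
    by (simp add: mvec_def scalar_prod_def atLeast0LessThan del: assoc_mult_mat)
  finally show "(kron A B *\<^sub>v mvec X) $ u = mvec (B * X * transpose_mat A) $ u" .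
qed (use A B X in \<open>simp add: kron_def mvec_def\<close>)

lemma transpose_kron: "transpose_mat (kron A B) = kron (transpose_mat A) (transpose_mat B)"
proof (rule eq_matI)
  fix i j
  assume "i < dim_row (kron (transpose_mat A) (transpose_mat B))"
    and "j < dim_col (kron (transpose_mat A) (transpose_mat B))"
  then have "i < dim_col A * dim_col B" and "j < dim_row A * dim_row B"
    by (auto simp: kron_def)
  then show "transpose_mat (kron A B) $$ (i, j) = kron (transpose_mat A) (transpose_mat B) $$ (i, j)"
    by (simp add: kron_def less_mult_imp_mod_div_less mult.commute)
qed (auto simp: kron_def)

lemma symkron_carrier: "A \<in> carrier_mat m n \<Longrightarrow> symkron A B \<in> carrier_mat (tri m) (tri n)"
  by (rule carrier_matI) (simp_all add: symkron_def)

lemma symkron_mult_svec: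
  fixes A B :: "'a::real_field mat"
  assumes A: "A \<in> carrier_mat m n" and B: "B \<in> carrier_mat m n"
    and S: "S \<in> carrier_mat n n" and sym: "transpose_mat S = S"
  shows "symkron A B *\<^sub>v svec S = svec (B * S * transpose_mat A)"
proof -
  have K: "kron A B \<in> carrier_mat (m * m) (n * n)"
    using A B kron_carrier[of A B] by simp
  have WK: "Wmat m * kron A B \<in> carrier_mat (tri m) (n * n)"
    using Wmat_carrier K by (rule mult_carrier_mat)
  have Wt: "transpose_mat (Wmat n) \<in> carrier_mat (n * n) (tri n)"
    using Wmat_carrier by simp
  have "symkron A B *\<^sub>v svec S = (Wmat m * kron A B) *\<^sub>v (transpose_mat (Wmat n) *\<^sub>v svec S)"
    using A assoc_mult_mat_vec[OF WK Wt svec_carrier[OF S]]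
    by (simp add: symkron_def del: assoc_mult_mat assoc_mult_mat_vec)
  also have "transpose_mat (Wmat n) *\<^sub>v svec S = mvec S"
    using transpose_Wmat_mult_vec[OF svec_carrier[OF S]] smat_svec[OF S sym] by simp
  also have "(Wmat m * kron A B) *\<^sub>v mvec S = Wmat m *\<^sub>v (kron A B *\<^sub>v mvec S)"
    using Wmat_carrier K mvec_carrier[OF S] by (rule assoc_mult_mat_vec)
  also have "\<dots> = svec (B * S * transpose_mat A)"
    using B by (simp add: kron_mult_mvec[OF A B S] svec_def)
  finally show ?thesis .
qed

lemma symkron_mult_svec_general:
  fixes A B :: "'a::real_field mat"
  assumes A: "A \<in> carrier_mat m n" and B: "B \<in> carrier_mat m n" and X: "X \<in> carrier_mat n n"
  shows "symkron A B *\<^sub>v svec X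
    = (1/2) \<cdot>\<^sub>v (svec (B * X * transpose_mat A) + svec (B * transpose_mat X * transpose_mat A))"
proof -
  define S where "S = (1/2) \<cdot>\<^sub>m (X + transpose_mat X)"
  have S: "S \<in> carrier_mat n n" and sym: "transpose_mat S = S"
    using X by (auto simp: S_def transpose_sym_part[OF X])
  have "svec X = svec S"
    using X by (simp add: S_def svec_sym_part)
  have Xt: "transpose_mat X \<in> carrier_mat n n" and At: "transpose_mat A \<in> carrier_mat n m"
    using A X by auto
  have BX: "B * X \<in> carrier_mat m n" and BXt: "B * transpose_mat X \<in> carrier_mat m n"
    using B X by auto
  have "B * S = (1/2) \<cdot>\<^sub>m (B * X + B * transpose_mat X)"
    using mult_smult_distrib[OF B add_carrier_mat[OF Xt]] mult_add_distrib_mat[OF B X Xt]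
    by (simp add: S_def)
  then have "B * S * transpose_mat A = (1/2) \<cdot>\<^sub>m ((B * X + B * transpose_mat X) * transpose_mat A)"
    using mult_smult_assoc_mat[OF add_carrier_mat[OF BXt] At] by simp
  also have "\<dots> = (1/2) \<cdot>\<^sub>m (B * X * transpose_mat A + B * transpose_mat X * transpose_mat A)"
    by (simp add: add_mult_distrib_mat[OF BX BXt At])
  finally have "symkron A B *\<^sub>v svec S
      = svec ((1/2) \<cdot>\<^sub>m (B * X * transpose_mat A + B * transpose_mat X * transpose_mat A))"
    by (simp add: symkron_mult_svec[OF A B S sym])
  also have "\<dots> = (1/2) \<cdot>\<^sub>v (svec (B * X * transpose_mat A) + svec (B * transpose_mat X * transpose_mat A))"
    using mult_carrier_mat[OF BX At] mult_carrier_mat[OF BXt At]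
    by (simp add: svec_smult[OF add_carrier_mat] svec_add del: assoc_mult_mat)
  finally show ?thesis
    using \<open>svec X = svec S\<close> by simp
qed

lemma symkron_commute:
  fixes A B :: "'a::real_field mat"
  assumes A: "A \<in> carrier_mat m n" and B: "B \<in> carrier_mat m n"
  shows "symkron A B = symkron B A"
proof (rule eq_mat_by_mult_svecI[OF symkron_carrier[OF A] symkron_carrier[OF B]])
  fix S :: "'a mat"
  assume S: "S \<in> carrier_mat n n" and sym: "transpose_mat S = S"
  have "B * S * transpose_mat A \<in> carrier_mat m m"
    using A B S by (intro mult_carrier_mat) auto
  then have "svec (B * S * transpose_mat A) = svec (transpose_mat (B * S * transpose_mat A))"
    by (rule svec_transpose[symmetric])
  also have "\<dots> = svec (A * S * transpose_mat B)"
    using transpose_mult_mult_transpose[OF B S A] sym by simp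
  finally show "symkron A B *\<^sub>v svec S = symkron B A *\<^sub>v svec S"
    using symkron_mult_svec[OF A B S sym] symkron_mult_svec[OF B A S sym] by simp
qed

lemma symkron_mult_svec_symp:
  fixes A B C :: "real mat"
  assumes A: "A \<in> carrier_mat m n" and B: "B \<in> carrier_mat m n" and C: "C \<in> carrier_mat n n"
  shows "symkron A B *\<^sub>v svec (symp C) = svec (symp (B * symp C * transpose_mat A))"
proof -
  have "symp C \<in> carrier_mat n n" and "transpose_mat (symp C) = symp C"
    using C by (auto simp: symp_def transpose_sym_part[OF C])
  moreover from this have "B * symp C * transpose_mat A \<in> carrier_mat m m"
    using A B by (intro mult_carrier_mat) auto
  ultimately show ?thesis
    using symkron_mult_svec[OF A B] by (simp add: symp_def svec_sym_part del: assoc_mult_mat)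
qed

lemma transpose_symkron:
  fixes A B :: "'a::real_field mat"
  assumes A: "A \<in> carrier_mat m n" and B: "B \<in> carrier_mat m n"
  shows "transpose_mat (symkron A B) = symkron (transpose_mat A) (transpose_mat B)"
proof -
  have K: "kron A B \<in> carrier_mat (m * m) (n * n)"
    using A B kron_carrier[of A B] by simp
  have "transpose_mat (symkron A B) = transpose_mat (Wmat m * kron A B * transpose_mat (Wmat n))"
    using A by (simp add: symkron_def del: assoc_mult_mat)
  also have "\<dots> = Wmat n * transpose_mat (kron A B) * transpose_mat (Wmat m)"
    using transpose_mult_mult_transpose[OF Wmat_carrier K Wmat_carrier] by simp
  also have "\<dots> = symkron (transpose_mat A) (transpose_mat B)"
    using A by (simp add: symkron_def transpose_kron del: assoc_mult_mat)
  finally show ?thesis .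
qed

lemma symkron_mult_symkron:
  fixes A B C D :: "'a::real_field mat"
  assumes A: "A \<in> carrier_mat m n" and B: "B \<in> carrier_mat m n"
    and C: "C \<in> carrier_mat n p" and D: "D \<in> carrier_mat n p"
  shows "symkron A B * symkron C D = (1/2) \<cdot>\<^sub>m (symkron (A * C) (B * D) + symkron (A * D) (B * C))"
proof (rule eq_mat_by_mult_svecI)
  have AC: "A * C \<in> carrier_mat m p" and AD: "A * D \<in> carrier_mat m p"
    and BC: "B * C \<in> carrier_mat m p" and BD: "B * D \<in> carrier_mat m p"
    using A B C D by auto
  show "symkron A B * symkron C D \<in> carrier_mat (tri m) (tri p)"
    by (rule mult_carrier_mat[OF symkron_carrier[OF A] symkron_carrier[OF C]])
  show "(1/2) \<cdot>\<^sub>m (symkron (A * C) (B * D) + symkron (A * D) (B * C)) \<in> carrier_mat (tri m) (tri p)"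
    using symkron_carrier[OF AC] symkron_carrier[OF AD] by auto
  fix S :: "'a mat"
  assume S: "S \<in> carrier_mat p p" and sym: "transpose_mat S = S"
  define X where "X = D * S * transpose_mat C"
  have X: "X \<in> carrier_mat n n"
    using C D S by (simp add: X_def)
  have "(symkron A B * symkron C D) *\<^sub>v svec S = symkron A B *\<^sub>v (symkron C D *\<^sub>v svec S)"
    using symkron_carrier[OF A] symkron_carrier[OF C] svec_carrier[OF S] by (rule assoc_mult_mat_vec)
  also have "symkron C D *\<^sub>v svec S = svec X"
    by (simp add: X_def symkron_mult_svec[OF C D S sym])
  also have "symkron A B *\<^sub>v svec X
      = (1/2) \<cdot>\<^sub>v (svec (B * X * transpose_mat A) + svec (B * transpose_mat X * transpose_mat A))"
    by (rule symkron_mult_svec_general[OF A B X])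
  also have "B * X * transpose_mat A = (B * D) * S * transpose_mat (A * C)"
    unfolding X_def by (rule mult_mult_transpose_comp[OF B D S C A])
  also have "B * transpose_mat X * transpose_mat A = (B * C) * S * transpose_mat (A * D)"
    unfolding X_def transpose_mult_mult_transpose[OF D S C] sym
    by (rule mult_mult_transpose_comp[OF B C S D A])
  also have "(1/2) \<cdot>\<^sub>v (svec ((B * D) * S * transpose_mat (A * C)) + svec ((B * C) * S * transpose_mat (A * D)))
      = ((1/2) \<cdot>\<^sub>m (symkron (A * C) (B * D) + symkron (A * D) (B * C))) *\<^sub>v svec S"
    using symkron_carrier[OF AC, of "B * D"] symkron_carrier[OF AD, of "B * C"] svec_carrier[OF S]
    by (simp add: smult_mat_mult_vec[OF add_carrier_mat] add_mult_distrib_mat_vec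
        symkron_mult_svec[OF AC BD S sym] symkron_mult_svec[OF AD BC S sym])
  finally show "(symkron A B * symkron C D) *\<^sub>v svec S
      = ((1/2) \<cdot>\<^sub>m (symkron (A * C) (B * D) + symkron (A * D) (B * C))) *\<^sub>v svec S" .
qed

lemma symkron_mult_symkron_same:
  fixes A B C :: "'a::real_field mat"
  assumes "A \<in> carrier_mat m n" and "B \<in> carrier_mat m n" and "C \<in> carrier_mat n p"
  shows "symkron A B * symkron C C = symkron (A * C) (B * C)"
  using symkron_mult_symkron[OF assms(1-3,3)] by (simp add: half_smult_double)

lemma symkron_same_mult_symkron:
  fixes A B C :: "'a::real_field mat"
  assumes A: "A \<in> carrier_mat m n" and B: "B \<in> carrier_mat m n" and C: "C \<in> carrier_mat p m"
  shows "symkron C C * symkron A B = symkron (C * A) (C * B)"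
proof -
  have "symkron (C * B) (C * A) = symkron (C * A) (C * B)"
    using A B C by (intro symkron_commute) auto
  then show ?thesis
    using symkron_mult_symkron[OF C C A B] by (simp add: half_smult_double)
qed

lemma kron_vec_eq_mvec_outer_prod:
  fixes x y :: "'a::comm_ring_1 vec"
  assumes x: "x \<in> carrier_vec n" and y: "y \<in> carrier_vec n"
  shows "kron_vec x y = mvec (outer_prod y x)"
proof (rule eq_vecI)
  fix u
  assume "u < dim_vec (mvec (outer_prod y x))"
  then have "u < n * n"
    using x y by (simp add: mvec_def outer_prod_def)
  then show "kron_vec x y $ u = mvec (outer_prod y x) $ u"
    using x y by (simp add: kron_vec_def mvec_def outer_prod_def less_mult_imp_mod_div_less mult.commute)
qed (use x y in \<open>simp add: kron_vec_def mvec_def outer_prod_def\<close>)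

lemma symkron_vec_eq_svec_outer_prod:
  fixes x y :: "'a::real_field vec"
  assumes "x \<in> carrier_vec n" and "y \<in> carrier_vec n"
  shows "symkron_vec x y = svec (outer_prod y x)"
  using assms by (simp add: symkron_vec_def svec_def kron_vec_eq_mvec_outer_prod outer_prod_def)

lemma svec_outer_prod_neq_zero:
  fixes x y :: "'a::real_field vec"
  assumes x: "x \<in> carrier_vec n" "x \<noteq> 0\<^sub>v n" and y: "y \<in> carrier_vec n" "y \<noteq> 0\<^sub>v n"
  shows "svec (outer_prod y x) \<noteq> 0\<^sub>v (tri n)"
proof
  assume "svec (outer_prod y x) = 0\<^sub>v (tri n)"
  then have "svec (outer_prod y x) = svec (0\<^sub>m n n)"
    by (simp add: svec_zero)
  then have "outer_prod y x + transpose_mat (outer_prod y x) = 0\<^sub>m n n"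
    using svec_eq_iff[OF outer_prod_carrier[OF y(1) x(1)] zero_carrier_mat] by simp
  have "y $ i * x $ j + y $ j * x $ i = 0" if "i < n" "j < n" for i j
  proof -
    have "(outer_prod y x + transpose_mat (outer_prod y x)) $$ (i, j) = 0"
      using \<open>outer_prod y x + transpose_mat (outer_prod y x) = 0\<^sub>m n n\<close> that by simp
    then show ?thesis
      using that x y by (simp add: outer_prod_def)
  qed
  then have "(\<forall>i<n. y $ i = 0) \<or> (\<forall>i<n. x $ i = 0)"
    by (rule symmetrized_product_eq_zero)
  then show False
    using x y by (auto simp: eq_vecI)
qed

lemma eigenvector_symkron:
  fixes A B :: "'a::real_field mat" and x y :: "'a vec"
  assumes A: "A \<in> carrier_mat n n" and B: "B \<in> carrier_mat n n"
    and x: "x \<in> carrier_vec n" "x \<noteq> 0\<^sub>v n" and y: "y \<in> carrier_vec n" "y \<noteq> 0\<^sub>v n"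
    and Ax: "A *\<^sub>v x = lam1 \<cdot>\<^sub>v x" and Bx: "B *\<^sub>v x = mu1 \<cdot>\<^sub>v x"
    and Ay: "A *\<^sub>v y = lam2 \<cdot>\<^sub>v y" and By: "B *\<^sub>v y = mu2 \<cdot>\<^sub>v y"
  shows "eigenvector (symkron A B) (symkron_vec x y) ((lam1 * mu2 + lam2 * mu1) / 2)"
proof -
  let ?Y = "outer_prod y x"
  have Y: "?Y \<in> carrier_mat n n"
    by (rule outer_prod_carrier[OF y(1) x(1)])
  have "B * ?Y * transpose_mat A = (mu2 * lam1) \<cdot>\<^sub>m ?Y"
    by (simp add: mult_outer_prod_mult_transpose[OF B A y(1) x(1)] By Ax outer_prod_smult)
  moreover have "B * transpose_mat ?Y * transpose_mat A = (mu1 * lam2) \<cdot>\<^sub>m transpose_mat ?Y"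
    by (simp add: transpose_outer_prod mult_outer_prod_mult_transpose[OF B A x(1) y(1)] Bx Ay
        outer_prod_smult)
  ultimately have "symkron A B *\<^sub>v svec ?Y = ((lam1 * mu2 + lam2 * mu1) / 2) \<cdot>\<^sub>v svec ?Y"
    using symkron_mult_svec_general[OF A B Y] svec_carrier[OF Y] Y
    by (auto simp: svec_smult svec_transpose intro!: eq_vecI simp: field_simps)
  then show ?thesis
    using symkron_carrier[OF A, of B] svec_carrier[OF Y] svec_outer_prod_neq_zero[OF x y]
    by (simp add: eigenvector_def symkron_vec_eq_svec_outer_prod[OF x(1) y(1)])
qed

lemma symkron_eq_zero_iff:
  fixes A B :: "'a::real_field mat"
  assumes A: "A \<in> carrier_mat m n" and B: "B \<in> carrier_mat m n"
  shows "symkron A B = 0\<^sub>m (tri m) (tri n) \<longleftrightarrow> A = 0\<^sub>m m n \<or> B = 0\<^sub>m m n"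
proof
  assume zero: "symkron A B = 0\<^sub>m (tri m) (tri n)"
  have F: "B $$ (i, j) * A $$ (i', k) + B $$ (i, k) * A $$ (i', j)
      + (B $$ (i', j) * A $$ (i, k) + B $$ (i', k) * A $$ (i, j)) = 0"
    if "j < n" "k < n" "i < m" "i' < m" for i i' j k
  proof -
    let ?Z = "B * sym_unit n j k * transpose_mat A"
    have Z: "?Z \<in> carrier_mat m m"
      using A B sym_unit_carrier[of n j k] by (intro mult_carrier_mat) auto
    have "svec ?Z = symkron A B *\<^sub>v svec (sym_unit n j k)"
      by (rule symkron_mult_svec[OF A B sym_unit_carrier transpose_sym_unit, symmetric])
    also have "\<dots> = 0\<^sub>v (tri m)"
      using zero svec_carrier[OF sym_unit_carrier] by (intro eq_vecI) (auto simp: scalar_prod_def)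
    also have "\<dots> = svec (0\<^sub>m m m)"
      by (simp add: svec_zero)
    finally have "svec ?Z = svec (0\<^sub>m m m)" .
    then have "?Z + transpose_mat ?Z = 0\<^sub>m m m"
      using svec_eq_iff[OF Z] by simp
    moreover have "(M + transpose_mat M) $$ (i, i') = M $$ (i, i') + M $$ (i', i)"
      if "M \<in> carrier_mat m m" for M :: "'a mat"
      using that \<open>i < m\<close> \<open>i' < m\<close> by simp
    ultimately have "?Z $$ (i, i') + ?Z $$ (i', i) = 0"
      using Z by (metis index_zero_mat(1) \<open>i < m\<close> \<open>i' < m\<close>)
    then show ?thesis
      unfolding mult_sym_unit_mult_transpose_index[OF B A that(1,2,3,4)]
        mult_sym_unit_mult_transpose_index[OF B A that(1,2,4,3)] .
  qed
  (* With F for j = k, for each column index j either column j of A or column j of B vanishes;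
     if A has a nonzero column j and B a nonzero column k, F for (j, k) becomes the same kind of
     symmetrized product of these two columns, which must then vanish. *)
  show "A = 0\<^sub>m m n \<or> B = 0\<^sub>m m n"
  proof (rule ccontr)
    assume "\<not> ?thesis"
    then obtain i j i' k where Aij: "i < m" "j < n" "A $$ (i, j) \<noteq> 0"
      and Bik: "i' < m" "k < n" "B $$ (i', k) \<noteq> 0"
      using nonzero_mat_index[OF A] nonzero_mat_index[OF B] by blast
    have col_zero: "(\<forall>i<m. A $$ (i, j) = 0) \<or> (\<forall>i<m. B $$ (i, j) = 0)" if "j < n" for j
    proof (rule symmetrized_product_eq_zero)
      fix i i'
      assume "i < m" and "i' < m"
      then have "2 * (A $$ (i, j) * B $$ (i', j) + A $$ (i', j) * B $$ (i, j)) = 0"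
        using F[OF that that] by (simp add: algebra_simps)
      then show "A $$ (i, j) * B $$ (i', j) + A $$ (i', j) * B $$ (i, j) = 0"
        by (metis mult_eq_0_iff zero_neq_numeral)
    qed
    have "\<forall>i<m. B $$ (i, j) = 0" and "\<forall>i<m. A $$ (i, k) = 0"
      using col_zero[OF Aij(2)] col_zero[OF Bik(2)] Aij Bik by auto
    then have "(\<forall>i<m. A $$ (i, j) = 0) \<or> (\<forall>i<m. B $$ (i, k) = 0)"
      by (intro symmetrized_product_eq_zero) (use F[OF Aij(2) Bik(2)] in \<open>simp add: algebra_simps\<close>)
    then show False
      using Aij Bik by auto
  qed
next
  assume "A = 0\<^sub>m m n \<or> B = 0\<^sub>m m n"
  then have "kron A B = 0\<^sub>m (m * m) (n * n)"
    using A B by (auto simp: kron_def less_mult_imp_mod_div_less intro!: eq_matI)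
  then show "symkron A B = 0\<^sub>m (tri m) (tri n)"
    using A by (simp add: symkron_def)
qed

theorem proposition3:
  fixes m n p :: nat
  shows
  "(\<forall>A B :: real mat. A \<in> carrier_mat m n \<longrightarrow> B \<in> carrier_mat m n \<longrightarrow>
      symkron A B = symkron B A)
   \<and> (\<forall>A B C :: real mat. A \<in> carrier_mat m n \<longrightarrow> B \<in> carrier_mat m n \<longrightarrow> C \<in> carrier_mat n n \<longrightarrow>
      symkron A B *\<^sub>v svec (symp C) = svec (symp (B * symp C * transpose_mat A)))
   \<and> (\<forall>A B :: real mat. A \<in> carrier_mat m n \<longrightarrow> B \<in> carrier_mat m n \<longrightarrow>
      transpose_mat (symkron A B) = symkron (transpose_mat A) (transpose_mat B))
   \<and> (\<forall>A B C D :: real mat. A \<in> carrier_mat m n \<longrightarrow> B \<in> carrier_mat m n \<longrightarrow>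
      C \<in> carrier_mat n p \<longrightarrow> D \<in> carrier_mat n p \<longrightarrow>
      symkron A B * symkron C D = (1/2) \<cdot>\<^sub>m (symkron (A * C) (B * D) + symkron (A * D) (B * C))
      \<and> symkron A B * symkron C C = symkron (A * C) (B * C))
   \<and> (\<forall>A B C :: real mat. A \<in> carrier_mat m n \<longrightarrow> B \<in> carrier_mat m n \<longrightarrow> C \<in> carrier_mat p m \<longrightarrow>
      symkron C C * symkron A B = symkron (C * A) (C * B))
   \<and> (\<forall>(A :: real mat) (B :: real mat) (x :: complex vec) (y :: complex vec) lam1 lam2 mu1 mu2.
      A \<in> carrier_mat n n \<longrightarrow> B \<in> carrier_mat n n \<longrightarrow>
      x \<in> carrier_vec n \<longrightarrow> y \<in> carrier_vec n \<longrightarrow> x \<noteq> 0\<^sub>v n \<longrightarrow> y \<noteq> 0\<^sub>v n \<longrightarrow>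
      map_mat complex_of_real A *\<^sub>v x = lam1 \<cdot>\<^sub>v x \<longrightarrow> map_mat complex_of_real B *\<^sub>v x = mu1 \<cdot>\<^sub>v x \<longrightarrow>
      map_mat complex_of_real A *\<^sub>v y = lam2 \<cdot>\<^sub>v y \<longrightarrow> map_mat complex_of_real B *\<^sub>v y = mu2 \<cdot>\<^sub>v y \<longrightarrow>
      eigenvector (symkron (map_mat complex_of_real A) (map_mat complex_of_real B))
        (symkron_vec x y) ((lam1 * mu2 + lam2 * mu1) / 2))
   \<and> (\<forall>A B :: real mat. A \<in> carrier_mat m n \<longrightarrow> B \<in> carrier_mat m n \<longrightarrow>
      (symkron A B = 0\<^sub>m (tri m) (tri n) \<longleftrightarrow> A = 0\<^sub>m m n \<or> B = 0\<^sub>m m n))"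
  by (intro conjI allI impI symkron_commute symkron_mult_svec_symp transpose_symkron
      symkron_mult_symkron symkron_mult_symkron_same symkron_same_mult_symkron symkron_eq_zero_iff
      eigenvector_symkron) simp_all

end
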